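(* Let $n\geq 3$ and let $A=(a_{ij})\in\mathcal{M}_{n}(\mathbb{Z})$ with $\det(A)\neq 0$. Let $\Lambda=\{Az: z\in\mathbb{Z}^n\}$ be the lattice generated by the columns of $A$, and let $\mathcal{F}_A$ be its set of $A$-feasible lattice vectors. Let $b=\max\{|a_{ij}| : 1\leq i,j\leq n\}$. If $\lambda=Az\in\mathcal{F}_A$ with $z=(z_1,\ldots,z_n)\in\mathbb{Z}^n$, then $\log(|z_i|)\leq n(\log(n)+\log(b))$ for all $1\leq i\leq n$.
   Context: Logarithms are in base $2$. $\|\cdot\|$ is the Euclidean norm, $d(x,y)=\|x-y\|$, and $d(x,\Lambda)=\min_{\lambda\in\Lambda}d(x,\lambda)$. The fundamental parallelepiped of $\Lambda$ with respect to $A$ is $\mathcal{P}_A=\{Ay : y\in[0,1)^n\}$. A lattice vector $\lambda\in\Lambda$ is $A$-feasible if there exists $x\in\mathcal{P}_A$ with $d(\lambda,x)=d(x,\Lambda)$; $\mathcal{F}_A$ is the set of $A$-feasible lattice vectors. *)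

theory Defs
  imports "HOL-Analysis.Analysis"
begin

definition real_mat :: "int^'n^'m \<Rightarrow> real^'n^'m" where
  "real_mat A = (\<chi> i j. real_of_int (A $ i $ j))"

definition real_vec :: "int^'n \<Rightarrow> real^'n" where
  "real_vec z = (\<chi> i. real_of_int (z $ i))"

definition lattice :: "int^'n^'n \<Rightarrow> (real^'n) set" where
  "lattice A = {real_mat A *v real_vec z | z. True}"

definition fund_par :: "int^'n^'n \<Rightarrow> (real^'n) set" where
  "fund_par A = {real_mat A *v y | y. \<forall>i. 0 \<le> y $ i \<and> y $ i < 1}"

definition feasible :: "int^'n^'n \<Rightarrow> (real^'n) set" where
  "feasible A = {l \<in> lattice A. \<exists>x \<in> fund_par A. \<forall>m \<in> lattice A. dist l x \<le> dist m x}"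

end

theory Submission
  imports Defs "HOL-Combinatorics.Permutations"
begin

text \<open>Let \<open>\<lambda> = Az\<close> be closest to \<open>x = Ay\<close>, \<open>y \<in> [0,1)\<^sup>n\<close>. Comparing with the lattice vector
  obtained by rounding the coordinates of \<open>y\<close> gives \<open>\<parallel>\<lambda> - x\<parallel>\<^sub>2 \<le> n\<^sup>3\<^sup>/\<^sup>2 b/2\<close>, hence
  \<open>\<parallel>\<lambda>\<parallel>\<^sub>1 \<le> \<parallel>x\<parallel>\<^sub>1 + \<surd>n \<parallel>\<lambda> - x\<parallel>\<^sub>2 \<le> 3n\<^sup>2b/2\<close>. By Cramer's rule \<open>z\<^sub>i det A\<close> is the determinant
  of \<open>A\<close> with its \<open>i\<close>-th column replaced by \<open>\<lambda>\<close>; in the Leibniz expansion of that determinant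
  each \<open>\<lambda>\<^sub>k\<close> occurs in \<open>(n-1)!\<close> products, so it is at most \<open>(n-1)! b\<^sup>n\<^sup>-\<^sup>1 \<parallel>\<lambda>\<parallel>\<^sub>1\<close>.
  Since \<open>A\<close> is integral, \<open>|det A| \<ge> 1\<close>, and \<open>3n! \<le> 2n\<^sup>n\<^sup>-\<^sup>1\<close> turns the result into \<open>|z\<^sub>i| \<le> (nb)\<^sup>n\<close>.\<close>

lemma card_permutes_with_value:
  assumes "finite S" "i \<in> S" "k \<in> S"
  shows "card {p. p permutes S \<and> p i = k} = fact (card S - 1)"
proof -
  let ?swap = "Transposition.transpose i k"
  have "bij_betw ((\<circ>) ?swap) {\<tau>. \<tau> permutes S - {i}} {p. p permutes S \<and> p i = k}"
  proof (rule bij_betw_byWitness[where f' = "(\<circ>) ?swap"])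
    show "(\<circ>) ?swap ` {\<tau>. \<tau> permutes S - {i}} \<subseteq> {p. p permutes S \<and> p i = k}"
    proof clarify
      fix \<tau> assume \<tau>: "\<tau> permutes S - {i}"
      then have "\<tau> i = i" "\<tau> permutes S"
        by (auto intro: permutes_not_in permutes_subset)
      then show "?swap \<circ> \<tau> permutes S \<and> (?swap \<circ> \<tau>) i = k"
        using assms by (auto intro: permutes_compose permutes_swap_id)
    qed
    show "(\<circ>) ?swap ` {p. p permutes S \<and> p i = k} \<subseteq> {\<tau>. \<tau> permutes S - {i}}"
      using permutes_insert_lemma[of _ i "S - {i}"] assms by (auto simp: insert_absorb)
  qed (auto simp: fun_eq_iff)
  then have "card {p. p permutes S \<and> p i = k} = card {\<tau>. \<tau> permutes S - {i}}"
    by (simp add: bij_betw_same_card)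
  also have "\<dots> = fact (card S - 1)"
    using assms by (intro card_permutations) auto
  finally show ?thesis .
qed

lemma sum_permutations_apply:
  fixes g :: "'n::finite \<Rightarrow> 'a::{comm_semiring_1,semiring_char_0}"
  shows "(\<Sum>p | p permutes (UNIV::'n set). g (p i)) = fact (CARD('n) - 1) * (\<Sum>k\<in>UNIV. g k)"
proof -
  have "(\<Sum>p | p permutes (UNIV::'n set). g (p i))
      = (\<Sum>k\<in>UNIV. \<Sum>p\<in>{q. q \<in> {p. p permutes (UNIV::'n set)} \<and> q i = k}. g (p i))"
    by (rule sum.group[symmetric]) (auto simp: finite_permutations)
  also have "\<dots> = (\<Sum>k\<in>UNIV. \<Sum>p | p permutes (UNIV::'n set) \<and> p i = k. g k)"
    by (intro sum.cong) auto
  also have "\<dots> = (\<Sum>k\<in>UNIV. fact (CARD('n) - 1) * g k)"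
    by (simp add: card_permutes_with_value)
  finally show ?thesis by (simp add: sum_distrib_left)
qed

lemma abs_det_column_replaced_le:
  fixes B :: "'a::linordered_idom^'n^'n" and c :: "'a^'n"
  assumes B: "\<And>k j. \<bar>B$k$j\<bar> \<le> \<beta>"
  shows "\<bar>det (\<chi> k j. if j = i then c$k else B$k$j)\<bar>
           \<le> fact (CARD('n) - 1) * \<beta>^(CARD('n) - 1) * (\<Sum>k\<in>UNIV. \<bar>c$k\<bar>)"
proof -
  define C where "C = (\<chi> k j. if j = i then c$k else B$k$j)"
  have "det C = det (transpose C)"
    by simp
  also have "\<dots> = (\<Sum>p | p permutes (UNIV::'n set). of_int (sign p) * (\<Prod>k\<in>UNIV. C$(p k)$k))"
    by (simp add: det_def transpose_def)
  finally have "\<bar>det C\<bar> \<le> (\<Sum>p | p permutes (UNIV::'n set). \<bar>of_int (sign p) * (\<Prod>k\<in>UNIV. C$(p k)$k)\<bar>)"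
    by (simp add: sum_abs)
  also have "\<dots> \<le> (\<Sum>p | p permutes (UNIV::'n set). \<beta>^(CARD('n) - 1) * \<bar>c$(p i)\<bar>)"
  proof (rule sum_mono)
    fix p
    have "\<bar>of_int (sign p) * (\<Prod>k\<in>UNIV. C$(p k)$k)\<bar> = \<bar>C$(p i)$i\<bar> * (\<Prod>k\<in>UNIV-{i}. \<bar>C$(p k)$k\<bar>)"
      by (simp add: sign_def abs_mult abs_prod prod.remove[of UNIV i])
    also have "\<dots> \<le> \<bar>c$(p i)\<bar> * (\<Prod>k\<in>UNIV-{i}. \<beta>)"
      by (intro mult_mono prod_mono) (auto simp: C_def B prod_nonneg)
    finally show "\<bar>of_int (sign p) * (\<Prod>k\<in>UNIV. C$(p k)$k)\<bar> \<le> \<beta>^(CARD('n) - 1) * \<bar>c$(p i)\<bar>"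
      by (simp add: card_Diff_singleton mult.commute)
  qed
  also have "\<dots> = \<beta>^(CARD('n) - 1) * (\<Sum>p | p permutes (UNIV::'n set). \<bar>c$(p i)\<bar>)"
    by (simp add: sum_distrib_left)
  also have "\<dots> = fact (CARD('n) - 1) * \<beta>^(CARD('n) - 1) * (\<Sum>k\<in>UNIV. \<bar>c$k\<bar>)"
    by (simp only: sum_permutations_apply[of "\<lambda>k. \<bar>c$k\<bar>"] mult_ac)
  finally show ?thesis unfolding C_def .
qed

lemma cramer_abs_component_le:
  fixes M :: "'a::linordered_field^'n^'n"
  assumes "\<bar>det M\<bar> \<ge> 1" and "\<And>k j. \<bar>M$k$j\<bar> \<le> \<beta>"
  shows "\<bar>x$i\<bar> \<le> fact (CARD('n) - 1) * \<beta>^(CARD('n) - 1) * (\<Sum>k\<in>UNIV. \<bar>(M *v x)$k\<bar>)"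
proof -
  have "\<bar>x$i\<bar> \<le> \<bar>x$i * det M\<bar>"
    using assms(1) by (simp add: abs_mult mult_le_cancel_left1)
  also have "\<dots> = \<bar>det (\<chi> k j. if j = i then (M *v x)$k else M$k$j)\<bar>"
    by (simp add: cramer_lemma)
  also have "\<dots> \<le> fact (CARD('n) - 1) * \<beta>^(CARD('n) - 1) * (\<Sum>k\<in>UNIV. \<bar>(M *v x)$k\<bar>)"
    using assms(2) by (rule abs_det_column_replaced_le)
  finally show ?thesis .
qed

lemma three_fact_le_two_pow:
  "3 \<le> n \<Longrightarrow> 3 * fact n \<le> 2 * (n::nat) ^ (n - 1)"
proof (induction n rule: nat_induct_at_least)
  case base
  then show ?case by (simp add: fact_numeral)
next
  case (Suc n)
  have "3 * fact (Suc n) = Suc n * (3 * fact n)" by simp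
  also have "\<dots> \<le> Suc n * (2 * n ^ (n - 1))" using Suc.IH by (rule mult_le_mono2)
  also have "\<dots> \<le> Suc n * (2 * Suc n ^ (n - 1))" by (intro mult_le_mono2 power_mono) auto
  also have "\<dots> = 2 * Suc n ^ (Suc n - 1)" using Suc.hyps
    by (cases n) (auto simp: algebra_simps)
  finally show ?case .
qed

lemma abs_matrix_vector_mult_le:
  fixes M :: "'a::linordered_idom^'n^'m"
  assumes M: "\<And>i j. \<bar>M$i$j\<bar> \<le> \<beta>" and v: "\<And>j. \<bar>v$j\<bar> \<le> \<delta>"
  shows "\<bar>(M *v v)$i\<bar> \<le> of_nat CARD('n) * \<beta> * \<delta>"
proof -
  have "\<bar>(M *v v)$i\<bar> \<le> (\<Sum>j\<in>UNIV. \<bar>M$i$j\<bar> * \<bar>v$j\<bar>)"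
    unfolding matrix_vector_mult_def by (simp add: order_trans[OF sum_abs] abs_mult)
  also have "\<dots> \<le> (\<Sum>j\<in>(UNIV::'n set). \<beta> * \<delta>)"
    by (intro sum_mono mult_mono M v) (auto intro: order_trans[OF abs_ge_zero M])
  finally show ?thesis by simp
qed

lemma norm_le_sqrt_card_mult:
  fixes v :: "real^'n"
  assumes "\<And>k. \<bar>v$k\<bar> \<le> \<delta>"
  shows "norm v \<le> sqrt CARD('n) * \<delta>"
proof -
  have "norm v = L2_set (\<lambda>k. \<bar>v$k\<bar>) UNIV"
    by (simp add: norm_vec_def)
  also have "\<dots> \<le> L2_set (\<lambda>k::'n. \<delta>) UNIV"
    by (intro L2_set_mono) (auto simp: assms)
  also have "\<dots> = sqrt CARD('n) * \<delta>"
    using order_trans[OF abs_ge_zero assms] by (simp add: L2_set_constant)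
  finally show ?thesis .
qed

lemma sum_abs_le_sqrt_card_mult_norm:
  fixes v :: "real^'n"
  shows "(\<Sum>k\<in>UNIV. \<bar>v$k\<bar>) \<le> sqrt CARD('n) * norm v"
  using L2_set_mult_ineq[of "\<lambda>_. 1" "\<lambda>k. \<bar>v$k\<bar>" UNIV] by (simp add: norm_vec_def L2_set_constant)

lemma feasible_closer_than_rounding:
  assumes "l \<in> feasible A"
  obtains y where "\<forall>i. 0 \<le> y$i \<and> y$i < 1"
    and "norm (l - real_mat A *v y) \<le> norm (real_mat A *v (real_vec (\<chi> j. round (y$j)) - y))"
proof -
  from assms obtain y where y: "\<forall>i. 0 \<le> y$i \<and> y$i < 1"
    and closest: "\<forall>m\<in>lattice A. dist l (real_mat A *v y) \<le> dist m (real_mat A *v y)"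
    unfolding feasible_def fund_par_def by auto
  have "real_mat A *v real_vec (\<chi> j. round (y$j)) \<in> lattice A"
    unfolding lattice_def by auto
  with closest have "norm (l - real_mat A *v y)
      \<le> norm (real_mat A *v real_vec (\<chi> j. round (y$j)) - real_mat A *v y)"
    by (auto simp: dist_norm)
  with y show thesis
    by (intro that) (auto simp: matrix_vector_mult_diff_distrib)
qed

lemma sum_abs_feasible_le:
  fixes A :: "int^'n^'n"
  assumes A: "\<And>i j. \<bar>real_mat A $ i $ j\<bar> \<le> \<beta>" and "l \<in> feasible A"
  shows "(\<Sum>k\<in>UNIV. \<bar>l$k\<bar>) \<le> 3/2 * CARD('n)^2 * \<beta>"
proof -
  let ?N = "real CARD('n)"
  obtain y where y: "\<forall>i. 0 \<le> y$i \<and> y$i < 1"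
    and closer: "norm (l - real_mat A *v y) \<le> norm (real_mat A *v (real_vec (\<chi> j. round (y$j)) - y))"
    using feasible_closer_than_rounding[OF assms(2)] by blast
  define x where "x = real_mat A *v y"
  have "\<bar>(real_mat A *v (real_vec (\<chi> j. round (y$j)) - y))$k\<bar> \<le> ?N * \<beta> * (1/2)" for k
    by (rule abs_matrix_vector_mult_le[OF A]) (use of_int_round_abs_le in \<open>simp add: real_vec_def\<close>)
  then have "norm (l - x) \<le> sqrt ?N * (?N * \<beta> * (1/2))"
    using closer unfolding x_def by (blast intro: order_trans norm_le_sqrt_card_mult)
  then have "(\<Sum>k\<in>UNIV. \<bar>(l - x)$k\<bar>) \<le> sqrt ?N * (sqrt ?N * (?N * \<beta> * (1/2)))"
    by (intro order_trans[OF sum_abs_le_sqrt_card_mult_norm] mult_left_mono) auto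
  also have "\<dots> = ?N^2 * \<beta> / 2"
    by (simp add: power2_eq_square)
  finally have dist_l1: "(\<Sum>k\<in>UNIV. \<bar>(l - x)$k\<bar>) \<le> ?N^2 * \<beta> / 2" .
  have "\<bar>x$k\<bar> \<le> ?N * \<beta> * 1" for k
    unfolding x_def by (rule abs_matrix_vector_mult_le[OF A]) (use y in \<open>auto simp: less_imp_le\<close>)
  then have "(\<Sum>k\<in>UNIV. \<bar>x$k\<bar>) \<le> ?N^2 * \<beta>"
    using sum_mono[of UNIV "\<lambda>k. \<bar>x$k\<bar>" "\<lambda>_. ?N * \<beta>"] by (simp add: power2_eq_square)
  moreover have "(\<Sum>k\<in>UNIV. \<bar>l$k\<bar>) \<le> (\<Sum>k\<in>UNIV. \<bar>x$k\<bar>) + (\<Sum>k\<in>UNIV. \<bar>(l - x)$k\<bar>)"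
    by (simp flip: sum.distrib add: sum_mono abs_triangle_ineq[of "x$_" "l$_ - x$_", simplified])
  ultimately show ?thesis
    using dist_l1 by simp
qed

lemma det_real_mat: "det (real_mat A) = real_of_int (det A)"
  unfolding real_mat_def det_def by simp

lemma abs_feasible_coordinate_le:
  fixes A :: "int^'n^'n" and \<beta> :: real
  assumes N: "CARD('n) \<ge> 3" and "det A \<noteq> 0"
    and A: "\<And>i j. \<bar>real_mat A $ i $ j\<bar> \<le> \<beta>"
    and feasible: "real_mat A *v real_vec z \<in> feasible A"
  shows "\<bar>real_of_int (z $ i)\<bar> \<le> (real CARD('n) * \<beta>) ^ CARD('n)"
proof -
  let ?N = "real CARD('n)"
  define m where "m = CARD('n) - 1"
  have card: "CARD('n) = Suc m"
    using N by (simp add: m_def)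
  have \<beta>: "0 \<le> \<beta>"
    using order_trans[OF abs_ge_zero A] .
  have "\<bar>det (real_mat A)\<bar> \<ge> 1"
    using assms(2) by (simp add: det_real_mat)
  then have "\<bar>real_vec z $ i\<bar>
      \<le> fact m * \<beta>^m * (\<Sum>k\<in>UNIV. \<bar>(real_mat A *v real_vec z)$k\<bar>)"
    unfolding m_def using A by (rule cramer_abs_component_le)
  also have "\<dots> \<le> fact m * \<beta>^m * (3/2 * ?N^2 * \<beta>)"
    using sum_abs_feasible_le[OF A feasible] \<beta> by (intro mult_left_mono) auto
  also have "\<dots> = 3 * fact (Suc m) * ?N * \<beta>^Suc m / 2"
    by (simp add: card power2_eq_square field_simps)
  also have "\<dots> \<le> 2 * ?N^m * ?N * \<beta>^Suc m / 2"
  proof -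
    have "3 * fact (Suc m) \<le> 2 * Suc m ^ m"
      using three_fact_le_two_pow[OF N] by (simp add: card)
    then have "real (3 * fact (Suc m)) \<le> real (2 * Suc m ^ m)"
      by (rule of_nat_mono)
    then have "3 * fact (Suc m) \<le> 2 * ?N^m"
      by (simp only: card of_nat_mult of_nat_fact of_nat_numeral of_nat_power)
    then show ?thesis
      using \<beta> by (intro divide_right_mono mult_right_mono) auto
  qed
  also have "\<dots> = (?N * \<beta>) ^ CARD('n)"
    by (simp add: card power_mult_distrib)
  finally show ?thesis
    by (simp add: real_vec_def)
qed

lemma abs_entry_le_Max_abs_entries:
  fixes A :: "int^'n^'m"
  shows "\<bar>A $ i $ j\<bar> \<le> Max {\<bar>A $ i $ j\<bar> | i j. True}"
proof (rule Max_ge)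
  have "{\<bar>A $ i $ j\<bar> | i j. True} = (\<lambda>(i, j). \<bar>A $ i $ j\<bar>) ` UNIV"
    by auto
  then show "finite {\<bar>A $ i $ j\<bar> | i j. True}"
    by simp
qed blast

lemma Max_abs_entries_ge_1:
  fixes A :: "int^'n^'n"
  assumes "det A \<noteq> 0"
  shows "1 \<le> Max {\<bar>A $ i $ j\<bar> | i j. True}"
proof -
  have "A \<noteq> 0"
    using assms det_0 by (metis mat_0)
  then obtain i j where "A $ i $ j \<noteq> 0"
    by (auto simp: vec_eq_iff)
  then show ?thesis
    using abs_entry_le_Max_abs_entries[of A i j] by linarith
qed

theorem proposition2p4:
  fixes A :: "int^'n^'n" and z :: "int^'n" and b :: int
  assumes "CARD('n) \<ge> 3"
    and "det A \<noteq> 0"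
    and "b = Max {\<bar>A $ i $ j\<bar> | i j. True}"
    and "real_mat A *v real_vec z \<in> feasible A"
  shows "\<forall>i. log 2 \<bar>real_of_int (z $ i)\<bar>
           \<le> real CARD('n) * (log 2 (real CARD('n)) + log 2 (real_of_int b))"
proof
  fix i
  let ?N = "real CARD('n)"
  have b: "1 \<le> b"
    using Max_abs_entries_ge_1[OF assms(2)] assms(3) by simp
  have "\<bar>real_mat A $ k $ j\<bar> \<le> real_of_int b" for k j
    using abs_entry_le_Max_abs_entries[of A k j] assms(3) by (simp add: real_mat_def)
  then have z: "\<bar>real_of_int (z $ i)\<bar> \<le> (?N * b) ^ CARD('n)"
    using abs_feasible_coordinate_le[OF assms(1,2) _ assms(4)] by blast
  have rhs_nonneg: "0 \<le> ?N * (log 2 ?N + log 2 b)"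
    using assms(1) b by (intro mult_nonneg_nonneg add_nonneg_nonneg) auto
  show "log 2 \<bar>real_of_int (z $ i)\<bar> \<le> ?N * (log 2 ?N + log 2 b)"
  proof (cases "z $ i = 0")
    case True
    \<comment> \<open>\<open>log 2 0 = 0\<close>, since HOL sets \<open>ln 0 = 0\<close>\<close>
    then show ?thesis
      using rhs_nonneg by (simp add: log_def)
  next
    case False
    then have "log 2 \<bar>real_of_int (z $ i)\<bar> \<le> log 2 ((?N * b) ^ CARD('n))"
      using z by simp
    also have "\<dots> = ?N * (log 2 ?N + log 2 b)"
      using assms(1) b by (simp add: log_mult log_nat_power)
    finally show ?thesis .
  qed
qed

end
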